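(* Fix $\sigma\in\mathcal A$ and a probability vector $\mathbf p$ with strictly positive entries. There exists a constant $C>1$ depending only on the sponge $F$ such that for all $\mathbf i\in\Sigma$, $0<R\le1$ and $r<\lambda_{\min}R$ for which $\mathbf i$ determines a $\sigma$-ordered cube both at scale $R$ and at scale $r$, \[ C^{-1}\Big(\frac Rr\Big)^{\underline S(\mathbf p,\sigma)}\le\frac{\mu_{\mathbf p}(B_{\mathbf i}(R))}{\mu_{\mathbf p}(B_{\mathbf i}(r))}\le C\Big(\frac Rr\Big)^{\overline S(\mathbf p,\sigma)}. \]
   Context: Setting: $\mathcal I=\{1,\dots,N\}$, $f_i(x)=A_ix+t_i$ on $\mathbb R^d$ with $A_i=\mathrm{diag}(\lambda_i^{(1)},\dots,\lambda_i^{(d)})$, all $\lambda_i^{(n)}\in(0,1)$, $f_i([0,1]^d)\subset[0,1]^d$, no two maps agree on $[0,1]^d$, and for all $m\ne n$ some $i$ has $\lambda_i^{(n)}\ne\lambda_i^{(m)}$; $F$ is the attractor. $\lambda_{\min}=\min_{i,n}\lambda_i^{(n)}$. $\Sigma=\mathcal I^{\mathbb N}$, $\mu_{\mathbf p}=\mathbf p^{\mathbb N}$. For $\mathbf i\in\Sigma$, $r>0$, $L_{\mathbf i}(r,n)$ is the unique integer with $\prod_{\ell=1}^{L_{\mathbf i}(r,n)}\lambda_{i_\ell}^{(n)}\le r<\prod_{\ell=1}^{L_{\mathbf i}(r,n)-1}\lambda_{i_\ell}^{(n)}$. $\mathbf i$ determines a $\sigma$-ordered cube at scale $r$ if $L_{\mathbf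 i}(r,\sigma_d)\le\dots\le L_{\mathbf i}(r,\sigma_1)$, ties resolved by: if coordinates $k<m$ have $L_{\mathbf i}(r,k)=L_{\mathbf i}(r,m)$ then $k$ precedes $m$ iff $\prod_{\ell=1}^{L_{\mathbf i}(r,k)}\lambda_{i_\ell}^{(k)}\ge\prod_{\ell=1}^{L_{\mathbf i}(r,k)}\lambda_{i_\ell}^{(m)}$. $\mathcal A$ is the set of $\sigma$ realised in this way by some $\mathbf i,r$. $E_n^\sigma$: span of coordinate axes $\sigma_1,\dots,\sigma_n$; $f_i,f_j$ overlap exactly on $E_n^\sigma$ if their orthogonal projections onto $E_n^\sigma$ agree on $[0,1]^d$. For $1\le n\le d-1$, $\mathcal I_n^\sigma$ is the set of $j$ such that no $i<j$ overlaps exactly with $j$ on $E_n^\sigma$; $\mathcal I_d^\sigma=\mathcal I$; $\Pi_n^\sigma j$ is the unique element of $\mathcal I_n^\sigma$ overlapping exactly with $j$ on $E_n^\sigma$ ($\Pi_d^\sigma=\mathrm{id}$, $\Pi_0^\sigma j=\emptyset$), extended to $\Sigma$ coordinatewise. $p_n^\sigma(i)=\sum_{j:\Pi_n^\sigma j=i}p(j)$, $p_0^\sigma(\emptyset)=1$, $P^\sigma_{n-1}(i)=p_n^\sigma(i)/p^\sigma_{n-1}(\Pi^\sigma_{n-1}i)$ for $i\in\mathcal I_n^\sigma$. $\overline S(\mathbf p,\sigma)=\sum_{n=1}^d\max_{i\in\mathcal I_n^\sigma}\frac{\log P^\sigma_{n-1}(i)}{\log\lambda_i^{(\sigma_n)}}$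 and $\underline S(\mathbf p,\sigma)$ is the same with $\min$. $B_{\mathbf i}(r)=\{\mathbf j\in\Sigma:|\Pi_n^\sigma\mathbf j\wedge\Pi_n^\sigma\mathbf i|\ge L_{\mathbf i}(r,\sigma_n)\ \forall n\}$, where $\sigma$ is the ordering of the cube determined by $\mathbf i$ at scale $r$ and $\wedge$ denotes the longest common prefix. *)

theory Defs
  imports "HOL-Probability.Probability"
begin

(* Conventions: maps are indexed by 0..N-1 (order preserved), coordinates by 0..d-1.
   A point of R^d is a function nat => real (only coordinates < d matter).
   lam i n = lambda_i^(n+1 in paper), t i n = translation. An ordering sigma is a
   permutation of {0..<d} with sigma a = sigma_{a+1} of the paper. *)

definition cube :: "nat \<Rightarrow> (nat \<Rightarrow> real) set" where
  "cube d = {x. \<forall>n<d. 0 \<le> x n \<and> x n \<le> 1}"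

definition fmap :: "(nat \<Rightarrow> nat \<Rightarrow> real) \<Rightarrow> (nat \<Rightarrow> nat \<Rightarrow> real) \<Rightarrow> nat \<Rightarrow> (nat \<Rightarrow> real) \<Rightarrow> (nat \<Rightarrow> real)" where
  "fmap lam t i x = (\<lambda>n. lam i n * x n + t i n)"

definition sponge_IFS :: "nat \<Rightarrow> nat \<Rightarrow> (nat \<Rightarrow> nat \<Rightarrow> real) \<Rightarrow> (nat \<Rightarrow> nat \<Rightarrow> real) \<Rightarrow> bool" where
  "sponge_IFS d N lam t \<longleftrightarrow> 1 \<le> d \<and> 1 \<le> N
     \<and> (\<forall>i<N. \<forall>n<d. 0 < lam i n \<and> lam i n < 1)
     \<and> (\<forall>i<N. fmap lam t i ` cube d \<subseteq> cube d)
     \<and> (\<forall>i<N. \<forall>j<N. i \<noteq> j \<longrightarrow> (\<exists>x\<in>cube d. \<exists>n<d. fmap lam t i x n \<noteq> fmap lam t j x n))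
     \<and> (\<forall>m<d. \<forall>n<d. m \<noteq> n \<longrightarrow> (\<exists>i<N. lam i n \<noteq> lam i m))"

definition lam_min :: "nat \<Rightarrow> nat \<Rightarrow> (nat \<Rightarrow> nat \<Rightarrow> real) \<Rightarrow> real" where
  "lam_min d N lam = Min {lam i n | i n. i < N \<and> n < d}"

definition SigmaN :: "nat \<Rightarrow> (nat \<Rightarrow> nat) set" where
  "SigmaN N = {i. \<forall>l. i l < N}"

definition cprod :: "(nat \<Rightarrow> nat \<Rightarrow> real) \<Rightarrow> (nat \<Rightarrow> nat) \<Rightarrow> nat \<Rightarrow> nat \<Rightarrow> real" where
  "cprod lam i L n = (\<Prod>l<L. lam (i l) n)"

(* L_i(r,n): the unique L with cprod L <= r < cprod (L-1) (for 0<r<1); the least such L *)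
definition Lfun :: "(nat \<Rightarrow> nat \<Rightarrow> real) \<Rightarrow> (nat \<Rightarrow> nat) \<Rightarrow> real \<Rightarrow> nat \<Rightarrow> nat" where
  "Lfun lam i r n = (LEAST L. cprod lam i L n \<le> r)"

definition prec :: "(nat \<Rightarrow> nat \<Rightarrow> real) \<Rightarrow> (nat \<Rightarrow> nat) \<Rightarrow> real \<Rightarrow> nat \<Rightarrow> nat \<Rightarrow> bool" where
  "prec lam i r k m \<longleftrightarrow>
     Lfun lam i r k > Lfun lam i r m \<or>
     (Lfun lam i r k = Lfun lam i r m \<and>
       ((k < m \<and> cprod lam i (Lfun lam i r k) k \<ge> cprod lam i (Lfun lam i r k) m) \<or>
        (m < k \<and> \<not> (cprod lam i (Lfun lam i r m) m \<ge> cprod lam i (Lfun lam i r m) k))))"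

definition perm_d :: "nat \<Rightarrow> (nat \<Rightarrow> nat) \<Rightarrow> bool" where
  "perm_d d \<sigma> \<longleftrightarrow> bij_betw \<sigma> {..<d} {..<d} \<and> (\<forall>n\<ge>d. \<sigma> n = n)"

definition ordered :: "nat \<Rightarrow> (nat \<Rightarrow> nat \<Rightarrow> real) \<Rightarrow> (nat \<Rightarrow> nat) \<Rightarrow> real \<Rightarrow> (nat \<Rightarrow> nat) \<Rightarrow> bool" where
  "ordered d lam i r \<sigma> \<longleftrightarrow> perm_d d \<sigma> \<and>
     (\<forall>a b. a < b \<and> b < d \<longrightarrow> prec lam i r (\<sigma> a) (\<sigma> b))"

definition Aset :: "nat \<Rightarrow> nat \<Rightarrow> (nat \<Rightarrow> nat \<Rightarrow> real) \<Rightarrow> (nat \<Rightarrow> nat) set" where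
  "Aset d N lam = {\<sigma>. \<exists>i\<in>SigmaN N. \<exists>r>0. ordered d lam i r \<sigma>}"

(* f_i, f_j overlap exactly on E_n^sigma (span of axes sigma_1..sigma_n) *)
definition overlap :: "nat \<Rightarrow> (nat \<Rightarrow> nat \<Rightarrow> real) \<Rightarrow> (nat \<Rightarrow> nat \<Rightarrow> real) \<Rightarrow> (nat \<Rightarrow> nat) \<Rightarrow> nat \<Rightarrow> nat \<Rightarrow> nat \<Rightarrow> bool" where
  "overlap d lam t \<sigma> n i j \<longleftrightarrow>
     (\<forall>x\<in>cube d. \<forall>k<n. fmap lam t i x (\<sigma> k) = fmap lam t j x (\<sigma> k))"

definition Iset :: "nat \<Rightarrow> nat \<Rightarrow> (nat \<Rightarrow> nat \<Rightarrow> real) \<Rightarrow> (nat \<Rightarrow> nat \<Rightarrow> real) \<Rightarrow> (nat \<Rightarrow> nat) \<Rightarrow> nat \<Rightarrow> nat set" where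
  "Iset d N lam t \<sigma> n =
     (if n = d then {..<N} else {j. j < N \<and> \<not> (\<exists>i<j. overlap d lam t \<sigma> n i j)})"

(* Pi_n^sigma; Pi_0^sigma j = emptyset is represented by 0 *)
definition Proj :: "nat \<Rightarrow> nat \<Rightarrow> (nat \<Rightarrow> nat \<Rightarrow> real) \<Rightarrow> (nat \<Rightarrow> nat \<Rightarrow> real) \<Rightarrow> (nat \<Rightarrow> nat) \<Rightarrow> nat \<Rightarrow> nat \<Rightarrow> nat" where
  "Proj d N lam t \<sigma> n j =
     (if n = d then j else if n = 0 then 0
      else (THE i. i \<in> Iset d N lam t \<sigma> n \<and> overlap d lam t \<sigma> n i j))"

definition pmass :: "nat \<Rightarrow> nat \<Rightarrow> (nat \<Rightarrow> nat \<Rightarrow> real) \<Rightarrow> (nat \<Rightarrow> nat \<Rightarrow> real) \<Rightarrow> nat pmf \<Rightarrow> (nat \<Rightarrow> nat) \<Rightarrow> nat \<Rightarrow> nat \<Rightarrow> real" where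
  "pmass d N lam t p \<sigma> n i =
     (if n = 0 then 1 else (\<Sum>j\<in>{j. j < N \<and> Proj d N lam t \<sigma> n j = i}. pmf p j))"

(* Pcond ... n i = P^sigma_{n-1}(i) for n >= 1 *)
definition Pcond :: "nat \<Rightarrow> nat \<Rightarrow> (nat \<Rightarrow> nat \<Rightarrow> real) \<Rightarrow> (nat \<Rightarrow> nat \<Rightarrow> real) \<Rightarrow> nat pmf \<Rightarrow> (nat \<Rightarrow> nat) \<Rightarrow> nat \<Rightarrow> nat \<Rightarrow> real" where
  "Pcond d N lam t p \<sigma> n i =
     pmass d N lam t p \<sigma> n i / pmass d N lam t p \<sigma> (n - 1) (Proj d N lam t \<sigma> (n - 1) i)"

definition Supper :: "nat \<Rightarrow> nat \<Rightarrow> (nat \<Rightarrow> nat \<Rightarrow> real) \<Rightarrow> (nat \<Rightarrow> nat \<Rightarrow> real) \<Rightarrow> nat pmf \<Rightarrow> (nat \<Rightarrow> nat) \<Rightarrow> real" where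
  "Supper d N lam t p \<sigma> = (\<Sum>n=1..d. Max ((\<lambda>i. ln (Pcond d N lam t p \<sigma> n i) / ln (lam i (\<sigma> (n - 1))))
                                         ` Iset d N lam t \<sigma> n))"

definition Slower :: "nat \<Rightarrow> nat \<Rightarrow> (nat \<Rightarrow> nat \<Rightarrow> real) \<Rightarrow> (nat \<Rightarrow> nat \<Rightarrow> real) \<Rightarrow> nat pmf \<Rightarrow> (nat \<Rightarrow> nat) \<Rightarrow> real" where
  "Slower d N lam t p \<sigma> = (\<Sum>n=1..d. Min ((\<lambda>i. ln (Pcond d N lam t p \<sigma> n i) / ln (lam i (\<sigma> (n - 1))))
                                         ` Iset d N lam t \<sigma> n))"

definition mu :: "nat pmf \<Rightarrow> (nat \<Rightarrow> nat) measure" where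
  "mu p = PiM UNIV (\<lambda>_::nat. measure_pmf p)"

definition ord_of :: "nat \<Rightarrow> (nat \<Rightarrow> nat \<Rightarrow> real) \<Rightarrow> (nat \<Rightarrow> nat) \<Rightarrow> real \<Rightarrow> (nat \<Rightarrow> nat)" where
  "ord_of d lam i r = (THE \<sigma>. ordered d lam i r \<sigma>)"

(* B_i(r): |Pi_n j ^ Pi_n i| >= L_i(r, sigma_n) for n = 1..d *)
definition Bball :: "nat \<Rightarrow> nat \<Rightarrow> (nat \<Rightarrow> nat \<Rightarrow> real) \<Rightarrow> (nat \<Rightarrow> nat \<Rightarrow> real) \<Rightarrow> (nat \<Rightarrow> nat) \<Rightarrow> real \<Rightarrow> (nat \<Rightarrow> nat) set" where
  "Bball d N lam t i r =
     (let \<sigma> = ord_of d lam i r in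
      {j \<in> SigmaN N. \<forall>n\<in>{1..d}. \<forall>l < Lfun lam i r (\<sigma> (n - 1)).
          Proj d N lam t \<sigma> n (j l) = Proj d N lam t \<sigma> n (i l)})"

end

theory Submission
  imports Defs
begin

text \<open>If \<open>i\<close> determines a \<open>\<sigma>\<close>-ordered cube at scale \<open>r\<close>, the ball \<open>B_i(r)\<close> is a product set
  in \<open>\<Sigma>\<close>: its \<open>l\<close>-th digit has to overlap exactly with \<open>i_l\<close> on \<open>E_k^\<sigma>\<close>, where
  \<open>\<sigma>_1, \<dots>, \<sigma>_k\<close> are the coordinates \<open>\<sigma>_n\<close> with \<open>l < L_i(r, \<sigma>_n)\<close> (an initial segment,
  because the ordering makes \<open>L_i(r, \<sigma>_n)\<close> decrease in \<open>n\<close>). Telescoping the conditional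
  probabilities gives \<open>\<mu>_p(B_i(r)) = \<Prod>_n \<Prod>_{l < L_i(r, \<sigma>_n)} P^\<sigma>_{n-1}(\<Pi>_n i_l)\<close>.
  For scales \<open>r \<le> R\<close> with the same ordering, \<open>\<mu>_p(B_i(r)) / \<mu>_p(B_i(R))\<close> is therefore the
  product of the factors with \<open>L_i(R, \<sigma>_n) \<le> l < L_i(r, \<sigma>_n)\<close>. Each factor is
  \<open>\<lambda>_{i_l}^(\<sigma>_n)\<close> raised to an exponent between the minimum and the maximum occurring in
  the definition of \<open>S\<close>, and over that range of \<open>l\<close> the product of the \<open>\<lambda>_{i_l}^(\<sigma>_n)\<close>
  is \<open>r/R\<close> up to a factor \<open>\<lambda>_min^\<plusminus>1\<close>.\<close>

section \<open>Orderings of approximate cubes\<close>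

lemma prec_irrefl: "\<not> prec lam i r k k"
  by (auto simp: prec_def)

lemma prec_asym: "prec lam i r k m \<Longrightarrow> \<not> prec lam i r m k"
  by (auto simp: prec_def)

lemma ordered_card_prec:
  assumes ord: "ordered d lam i r s" and a: "a < d"
  shows "card {c\<in>{..<d}. prec lam i r c (s a)} = a"
proof -
  have bij: "bij_betw s {..<d} {..<d}"
    using ord by (simp add: ordered_def perm_d_def)
  have prec_iff: "prec lam i r (s b) (s a) \<longleftrightarrow> b < a" if "b < d" for b
    using ord that a prec_irrefl prec_asym unfolding ordered_def
    by (metis linorder_neqE_nat)
  have "{c\<in>{..<d}. prec lam i r c (s a)} = s ` {..<a}"
  proof -
    have "{c\<in>{..<d}. prec lam i r c (s a)} = s ` {b\<in>{..<d}. prec lam i r (s b) (s a)}"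
      using bij by (auto simp: bij_betw_def)
    also have "{b\<in>{..<d}. prec lam i r (s b) (s a)} = {..<a}"
      using prec_iff a by auto
    finally show ?thesis .
  qed
  moreover have "inj_on s {..<a}"
    using bij a by (auto simp: bij_betw_def intro: inj_on_subset)
  ultimately show ?thesis
    by (simp add: card_image)
qed

lemma ordered_unique:
  assumes ord: "ordered d lam i r s" and ord': "ordered d lam i r s'"
  shows "s = s'"
proof
  fix a
  show "s a = s' a"
  proof (cases "a < d")
    case True
    have "bij_betw s {..<d} {..<d}" "bij_betw s' {..<d} {..<d}"
      using ord ord' by (simp_all add: ordered_def perm_d_def)
    then obtain b where b: "b < d" "s a = s' b"
      using True by (metis bij_betw_apply bij_betw_imp_surj_on imageE lessThan_iff)
    then have "a = b"
      using ordered_card_prec[OF ord True] ordered_card_prec[OF ord' b(1)] by simp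
    then show ?thesis
      using b by simp
  next
    case False
    then show ?thesis
      using ord ord' by (simp add: ordered_def perm_d_def)
  qed
qed

lemma ord_of_eq: "ordered d lam i r s \<Longrightarrow> ord_of d lam i r = s"
  unfolding ord_of_def using ordered_unique by blast

lemma ordered_Lfun_antimono:
  assumes "ordered d lam i r s" "a \<le> b" "b < d"
  shows "Lfun lam i r (s b) \<le> Lfun lam i r (s a)"
proof (cases "a = b")
  case False
  then have "prec lam i r (s a) (s b)"
    using assms unfolding ordered_def by auto
  then show ?thesis
    unfolding prec_def by auto
qed simp

lemma downward_closed_eq_atLeastAtMost:
  fixes S :: "nat set"
  assumes "finite S" "0 \<notin> S" "\<And>n n'. n \<in> S \<Longrightarrow> 1 \<le> n' \<Longrightarrow> n' \<le> n \<Longrightarrow> n' \<in> S"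
  shows "S = {1..Max (insert 0 S)}"
proof (intro set_eqI iffI)
  fix n assume "n \<in> S"
  then show "n \<in> {1..Max (insert 0 S)}"
    using assms(1,2) by (auto simp: Suc_le_eq intro: gr0I)
next
  fix n assume n: "n \<in> {1..Max (insert 0 S)}"
  then have "Max (insert 0 S) \<in> S"
    using Max_in[of "insert 0 S"] assms(1) by auto
  then show "n \<in> S"
    using assms(3) n by auto
qed

lemma ordered_Lfun_gt_initial_segment:
  assumes ord: "ordered d lam i r s"
  obtains k where "k \<le> d" "{n\<in>{1..d}. l < Lfun lam i r (s (n - 1))} = {1..k}"
proof -
  define S where "S = {n\<in>{1..d}. l < Lfun lam i r (s (n - 1))}"
  define k where "k = Max (insert 0 S)"
  have S_eq: "S = {1..k}"
    unfolding k_def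
  proof (rule downward_closed_eq_atLeastAtMost)
    show "n' \<in> S" if "n \<in> S" "1 \<le> n'" "n' \<le> n" for n n'
    proof -
      have "Lfun lam i r (s (n - 1)) \<le> Lfun lam i r (s (n' - 1))"
        using ordered_Lfun_antimono[OF ord, of "n' - 1" "n - 1"] that by (auto simp: S_def)
      then show ?thesis
        using that by (auto simp: S_def)
    qed
  qed (auto simp: S_def)
  moreover have "k \<le> d"
  proof (cases "k = 0")
    case False
    then have "k \<in> S"
      using S_eq by simp
    then show ?thesis
      by (simp add: S_def)
  qed simp
  ultimately show ?thesis
    using that unfolding S_def by blast
qed

section \<open>The scales \<open>L\<^sub>i(r,n)\<close>\<close>

lemma cprod_Suc: "cprod lam i (Suc L) c = cprod lam i L c * lam (i L) c"
  by (simp add: cprod_def)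

lemma cprod_le_Lfun:
  assumes "0 < r" "q < 1" "\<And>l. 0 \<le> lam (i l) c" "\<And>l. lam (i l) c \<le> q"
  shows "cprod lam i (Lfun lam i r c) c \<le> r"
proof -
  obtain L where L: "q ^ L < r"
    using real_arch_pow_inv[OF assms(1,2)] by blast
  have "cprod lam i L c \<le> q ^ L"
    using prod_mono[of "{..<L}" "\<lambda>l. lam (i l) c" "\<lambda>_. q"] assms(3,4)
    by (simp add: cprod_def)
  with L have "cprod lam i L c \<le> r"
    by simp
  then show ?thesis
    unfolding Lfun_def by (rule LeastI)
qed

lemma cprod_Lfun_gt:
  assumes "0 < m" "m < 1" "0 < r" "r \<le> 1" "\<And>l. m \<le> lam (i l) c"
  shows "m * r < cprod lam i (Lfun lam i r c) c"
proof (cases "Lfun lam i r c")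
  case 0
  have "m * r \<le> m"
    using assms(1,4) by (simp add: mult_left_le)
  then show ?thesis
    using 0 assms(2) by (simp add: cprod_def)
next
  case (Suc K)
  then have "r < cprod lam i K c"
    using not_less_Least[of K "\<lambda>L. cprod lam i L c \<le> r"] by (simp add: Lfun_def)
  have "m * r \<le> lam (i K) c * r"
    using assms(3,5) by (simp add: mult_right_mono)
  also have "\<dots> < lam (i K) c * cprod lam i K c"
    using \<open>r < cprod lam i K c\<close> assms(1) assms(5)[of K] by simp
  finally show ?thesis
    using Suc by (simp add: cprod_Suc mult.commute)
qed

lemma Lfun_antimono:
  "cprod lam i (Lfun lam i r c) c \<le> r \<Longrightarrow> r \<le> R \<Longrightarrow> Lfun lam i R c \<le> Lfun lam i r c"
  unfolding Lfun_def[of lam i R] by (rule Least_le) simp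

lemma prod_atLeastLessThan_eq_cprod_quotient:
  assumes "L \<le> L'" "\<And>l. 0 < lam (i l) c"
  shows "(\<Prod>l\<in>{L..<L'}. lam (i l) c) = cprod lam i L' c / cprod lam i L c"
proof -
  have "cprod lam i L' c = cprod lam i L c * (\<Prod>l\<in>{L..<L'}. lam (i l) c)"
    unfolding cprod_def using assms(1)
    by (simp add: atLeast0LessThan[symmetric] prod.atLeastLessThan_concat)
  moreover have "0 < cprod lam i L c"
    using assms(2) by (simp add: cprod_def prod_pos)
  ultimately show ?thesis
    by simp
qed

lemma prod_Lfun_between_bounds:
  assumes "0 < m" "q < 1" "\<And>l. m \<le> lam (i l) c" "\<And>l. lam (i l) c \<le> q"
    and "0 < r" "r \<le> R" "R \<le> 1"
  shows "m * (r / R) \<le> (\<Prod>l\<in>{Lfun lam i R c..<Lfun lam i r c}. lam (i l) c)"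
    and "(\<Prod>l\<in>{Lfun lam i R c..<Lfun lam i r c}. lam (i l) c) \<le> r / (m * R)"
proof -
  have m1: "m < 1"
    using assms(2) assms(3,4)[of 0] by simp
  have pos: "0 < lam (i l) c" for l
    using assms(1) assms(3)[of l] by simp
  have cprod_pos: "0 < cprod lam i L c" for L
    using pos by (simp add: cprod_def prod_pos)
  have le: "cprod lam i (Lfun lam i s c) c \<le> s" if "0 < s" for s
    using cprod_le_Lfun[OF that assms(2)] pos assms(4) less_imp_le by blast
  have gt: "m * s < cprod lam i (Lfun lam i s c) c" if "0 < s" "s \<le> 1" for s
    using cprod_Lfun_gt[of m s lam i c] assms(1,3) m1 that by blast
  have "Lfun lam i R c \<le> Lfun lam i r c"
    using Lfun_antimono[OF le[OF assms(5)] assms(6)] .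
  then have quot: "(\<Prod>l\<in>{Lfun lam i R c..<Lfun lam i r c}. lam (i l) c)
      = cprod lam i (Lfun lam i r c) c / cprod lam i (Lfun lam i R c) c"
    using prod_atLeastLessThan_eq_cprod_quotient pos by blast
  have R: "0 < R" "R \<le> 1"
    using assms(5-7) by auto
  have r: "r \<le> 1"
    using assms(6,7) by simp
  show "m * (r / R) \<le> (\<Prod>l\<in>{Lfun lam i R c..<Lfun lam i r c}. lam (i l) c)"
    unfolding quot times_divide_eq_right using gt[OF assms(5) r] le[OF R(1)] cprod_pos
    by (intro frac_le) (auto intro: less_imp_le)
  show "(\<Prod>l\<in>{Lfun lam i R c..<Lfun lam i r c}. lam (i l) c) \<le> r / (m * R)"
    unfolding quot using le[OF assms(5)] gt[OF R] assms(1,5) R cprod_pos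
    by (intro frac_le) (auto intro: less_imp_le)
qed

section \<open>Products of measures and of powers\<close>

lemma measure_PiM_Pi_eventually_one:
  fixes M :: "'a measure" and E :: "nat \<Rightarrow> 'a set"
  assumes "prob_space M" "\<And>l. E l \<in> sets M" "\<And>l. K \<le> l \<Longrightarrow> measure M (E l) = 1"
  shows "measure (PiM UNIV (\<lambda>_. M)) (Pi UNIV E) = (\<Prod>l<K. measure M (E l))"
proof -
  interpret M: prob_space M
    by fact
  interpret sequence_space M
    by unfold_locales
  have "(\<Prod>l\<le>n. measure M (E l)) = (\<Prod>l<K. measure M (E l))" if "K \<le> n" for n
  proof -
    have split: "{..n} = {..<K} \<union> {K..n}"
      using that by auto
    have "(\<Prod>l\<in>{..<K} \<union> {K..n}. measure M (E l))
        = (\<Prod>l<K. measure M (E l)) * (\<Prod>l\<in>{K..n}. measure M (E l))"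
      by (rule prod.union_disjoint) auto
    then show ?thesis
      unfolding split[symmetric] using assms(3) by simp
  qed
  then have "(\<lambda>n. \<Prod>l\<le>n. measure M (E l)) \<longlonglongrightarrow> (\<Prod>l<K. measure M (E l))"
    by (intro tendsto_eventually eventually_sequentiallyI)
  then show ?thesis
    using LIMSEQ_unique[OF measure_PiM_countable[OF assms(2)]] by simp
qed

lemma prod_powr_bounds:
  fixes x s :: "'a \<Rightarrow> real"
  assumes "\<And>l. l \<in> A \<Longrightarrow> 0 < x l \<and> x l \<le> 1" "\<And>l. l \<in> A \<Longrightarrow> a \<le> s l \<and> s l \<le> b"
  shows "(\<Prod>l\<in>A. x l) powr b \<le> (\<Prod>l\<in>A. x l powr s l)"
    and "(\<Prod>l\<in>A. x l powr s l) \<le> (\<Prod>l\<in>A. x l) powr a"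
proof -
  show "(\<Prod>l\<in>A. x l) powr b \<le> (\<Prod>l\<in>A. x l powr s l)"
    unfolding prod_powr_distrib
    using assms powr_mono'[of "s _" b "x _"] by (intro prod_mono) (simp add: less_imp_le)
  show "(\<Prod>l\<in>A. x l powr s l) \<le> (\<Prod>l\<in>A. x l) powr a"
    unfolding prod_powr_distrib
    using assms powr_mono'[of a "s _" "x _"] by (intro prod_mono) (simp add: less_imp_le)
qed

section \<open>Contraction ratios of the sponge\<close>

locale sponge_ordering =
  fixes d N :: nat and lam t :: "nat \<Rightarrow> nat \<Rightarrow> real" and p :: "nat pmf" and \<sigma> :: "nat \<Rightarrow> nat"
  assumes sponge: "sponge_IFS d N lam t"
    and perm: "perm_d d \<sigma>"
    and set_p: "set_pmf p = {..<N}"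
begin

abbreviation "ovl \<equiv> overlap d lam t \<sigma>"
abbreviation "proj \<equiv> Proj d N lam t \<sigma>"
abbreviation "reps \<equiv> Iset d N lam t \<sigma>"

lemma d_ge_1: "1 \<le> d" and N_ge_1: "1 \<le> N"
  using sponge by (auto simp: sponge_IFS_def)

lemma lam_pos: "i < N \<Longrightarrow> n < d \<Longrightarrow> 0 < lam i n"
  and lam_less_1: "i < N \<Longrightarrow> n < d \<Longrightarrow> lam i n < 1"
  using sponge by (auto simp: sponge_IFS_def)

lemma \<sigma>_less: "k < d \<Longrightarrow> \<sigma> k < d"
  using perm bij_betw_apply unfolding perm_d_def by fastforce

lemma finite_lam_values: "finite {lam i n | i n. i < N \<and> n < d}"
proof -
  have "{lam i n | i n. i < N \<and> n < d} = (\<lambda>(i, n). lam i n) ` ({..<N} \<times> {..<d})"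
    by auto
  then show ?thesis
    by simp
qed

lemma lam_min_le: "i < N \<Longrightarrow> n < d \<Longrightarrow> lam_min d N lam \<le> lam i n"
  unfolding lam_min_def using finite_lam_values by (intro Min_le) auto

lemma lam_min_pos: "0 < lam_min d N lam"
  unfolding lam_min_def using finite_lam_values d_ge_1 N_ge_1 lam_pos
  by (subst Min_gr_iff) fastforce+

lemma lam_min_less_1: "lam_min d N lam < 1"
  using lam_min_le[of 0 0] lam_less_1[of 0 0] d_ge_1 N_ge_1 by simp

lemma lam_uniformly_less_1: "\<exists>q<1. \<forall>i<N. \<forall>n<d. lam i n \<le> q"
proof (intro exI conjI allI impI)
  have "lam 0 0 \<in> {lam i n | i n. i < N \<and> n < d}"
    using d_ge_1 N_ge_1 by force
  then have "{lam i n | i n. i < N \<and> n < d} \<noteq> {}"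
    by blast
  then show "Max {lam i n | i n. i < N \<and> n < d} < 1"
    using finite_lam_values lam_less_1 by (auto simp: Max_less_iff)
  show "lam i n \<le> Max {lam i n | i n. i < N \<and> n < d}" if "i < N" "n < d" for i n
    using finite_lam_values that by (intro Max_ge) auto
qed

lemma Lfun_scale_antimono:
  assumes "i \<in> SigmaN N" "c < d" "0 < r" "r \<le> R"
  shows "Lfun lam i R c \<le> Lfun lam i r c"
proof -
  obtain q where "q < 1" "\<forall>j<N. \<forall>n<d. lam j n \<le> q"
    using lam_uniformly_less_1 by blast
  then have "cprod lam i (Lfun lam i r c) c \<le> r"
    using assms lam_pos by (intro cprod_le_Lfun) (auto simp: SigmaN_def less_imp_le)
  then show ?thesis
    using assms(4) by (rule Lfun_antimono)
qed

section \<open>Exact overlaps and the projections \<open>\<Pi>\<^sub>n\<^sup>\<sigma>\<close>\<close>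

lemma overlap_refl: "ovl n a a"
  and overlap_sym: "ovl n a b \<Longrightarrow> ovl n b a"
  and overlap_trans: "ovl n a b \<Longrightarrow> ovl n b c \<Longrightarrow> ovl n a c"
  and overlap_mono: "ovl n a b \<Longrightarrow> m \<le> n \<Longrightarrow> ovl m a b"
  by (simp_all add: overlap_def)

lemma overlap_lam_eq:
  assumes "ovl n a b" "k < n"
  shows "lam a (\<sigma> k) = lam b (\<sigma> k)"
proof -
  have "(\<lambda>_. 0) \<in> cube d" "(\<lambda>_. 1) \<in> cube d"
    by (auto simp: cube_def)
  then have "fmap lam t a (\<lambda>_. 0) (\<sigma> k) = fmap lam t b (\<lambda>_. 0) (\<sigma> k)"
      "fmap lam t a (\<lambda>_. 1) (\<sigma> k) = fmap lam t b (\<lambda>_. 1) (\<sigma> k)"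
    using assms unfolding overlap_def by blast+
  then show ?thesis
    by (simp add: fmap_def)
qed

lemma overlap_d_eq:
  assumes "ovl d a b" "a < N" "b < N"
  shows "a = b"
proof (rule ccontr)
  assume "a \<noteq> b"
  moreover have "\<forall>i<N. \<forall>j<N. i \<noteq> j \<longrightarrow> (\<exists>x\<in>cube d. \<exists>n<d. fmap lam t i x n \<noteq> fmap lam t j x n)"
    using sponge by (simp add: sponge_IFS_def)
  ultimately obtain x n where x: "x \<in> cube d" "n < d" "fmap lam t a x n \<noteq> fmap lam t b x n"
    using assms(2,3) by blast
  obtain k where "k < d" "n = \<sigma> k"
    using perm x(2) unfolding perm_d_def bij_betw_def by (metis imageE lessThan_iff)
  then show False
    using assms(1) x unfolding overlap_def by blast
qed

lemma reps_subset: "reps n \<subseteq> {..<N}"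
  by (auto simp: Iset_def)

lemma reps_overlap_eq:
  assumes "n \<le> d" "a \<in> reps n" "b \<in> reps n" "ovl n a b"
  shows "a = b"
proof (cases "n = d")
  case True
  then show ?thesis
    using assms reps_subset overlap_d_eq by blast
next
  case False
  have "\<not> a < b"
    using assms(3,4) False by (auto simp: Iset_def)
  moreover have "\<not> b < a"
    using assms(2,4) False overlap_sym by (auto simp: Iset_def)
  ultimately show ?thesis
    by simp
qed

lemma proj_reps_overlap:
  assumes "1 \<le> n" "n \<le> d" "a < N"
  shows "proj n a \<in> reps n \<and> ovl n (proj n a) a"
proof (cases "n = d")
  case True
  then show ?thesis
    using assms by (simp add: Proj_def Iset_def overlap_refl)
next
  case False
  define m where "m = (LEAST i. ovl n i a)"
  have m: "ovl n m a" "m \<le> a"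
    unfolding m_def by (auto intro: LeastI Least_le overlap_refl)
  have "\<not> ovl n i a" if "i < m" for i
    using not_less_Least[of i "\<lambda>i. ovl n i a"] that m_def by simp
  then have m_reps: "m \<in> reps n"
    using False m assms(3) unfolding Iset_def by (auto dest: overlap_trans[OF _ m(1)])
  have "(THE i. i \<in> reps n \<and> ovl n i a) = m"
    using m_reps m(1) reps_overlap_eq[OF assms(2) _ m_reps] overlap_sym overlap_trans
    by (intro the_equality) blast+
  then show ?thesis
    using False assms(1) m_reps m(1) by (simp add: Proj_def)
qed

lemma proj_less: "1 \<le> n \<Longrightarrow> n \<le> d \<Longrightarrow> a < N \<Longrightarrow> proj n a < N"
  using proj_reps_overlap reps_subset by blast

lemma proj_eq_iff:
  assumes "1 \<le> n" "n \<le> d" "a < N" "b < N"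
  shows "proj n a = proj n b \<longleftrightarrow> ovl n a b"
  using proj_reps_overlap[OF assms(1,2,3)] proj_reps_overlap[OF assms(1,2,4)]
    reps_overlap_eq[OF assms(2)] overlap_sym overlap_trans by metis

lemma proj_reps: "1 \<le> n \<Longrightarrow> n \<le> d \<Longrightarrow> j \<in> reps n \<Longrightarrow> proj n j = j"
  using proj_reps_overlap reps_overlap_eq reps_subset by blast

lemma proj_proj:
  assumes "m \<le> n" "n \<le> d" "a < N"
  shows "proj m (proj n a) = proj m a"
proof (cases "m = 0")
  case True
  then show ?thesis
    using d_ge_1 by (simp add: Proj_def)
next
  case False
  then have "ovl m (proj n a) a"
    using assms proj_reps_overlap[of n a] overlap_mono by auto
  then show ?thesis
    using assms False proj_eq_iff[of m "proj n a" a] proj_less[of n a] by simp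
qed

lemma lam_proj:
  "1 \<le> n \<Longrightarrow> n \<le> d \<Longrightarrow> a < N \<Longrightarrow> lam (proj n a) (\<sigma> (n - 1)) = lam a (\<sigma> (n - 1))"
  using proj_reps_overlap[of n a] overlap_lam_eq[of n "proj n a" a "n - 1"] by simp


section \<open>The measure of an approximate cube\<close>

definition cyl :: "nat \<Rightarrow> nat \<Rightarrow> nat set" where
  "cyl m a = {x. x < N \<and> ovl m x a}"

definition cyl_prob :: "nat \<Rightarrow> nat \<Rightarrow> real" where
  "cyl_prob m a = measure p (cyl m a)"

lemma finite_cyl: "finite (cyl m a)"
  by (rule finite_subset[of _ "{..<N}"]) (auto simp: cyl_def)

lemma measure_lessThan_N: "measure p {..<N} = 1"
  using measure_Int_set_pmf[of p UNIV] set_p by simp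

lemma cyl_prob_pos: "a < N \<Longrightarrow> 0 < cyl_prob m a"
proof -
  assume a: "a < N"
  have "pmf p a \<le> sum (pmf p) (cyl m a)"
    using a by (intro member_le_sum) (auto simp: cyl_def overlap_refl)
  moreover have "0 < pmf p a"
    using a set_p by (simp add: pmf_positive)
  ultimately show ?thesis
    unfolding cyl_prob_def by (simp add: measure_measure_pmf_finite cyl_def)
qed

lemma cyl_prob_0: "cyl_prob 0 a = 1"
  using measure_lessThan_N by (simp add: cyl_prob_def cyl_def overlap_def lessThan_def)

lemma cyl_prob_antimono: "m' \<le> m \<Longrightarrow> cyl_prob m a \<le> cyl_prob m' a"
  unfolding cyl_prob_def cyl_def
  by (intro measure_pmf.finite_measure_mono) (auto intro: overlap_mono)

lemma pmass_proj: "m \<le> d \<Longrightarrow> a < N \<Longrightarrow> pmass d N lam t p \<sigma> m (proj m a) = cyl_prob m a"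
proof (cases "m = 0")
  case True
  then show ?thesis
    by (simp add: pmass_def cyl_prob_0)
next
  case False
  assume "m \<le> d" "a < N"
  then have "{j. j < N \<and> proj m j = proj m a} = cyl m a"
    using False proj_eq_iff by (auto simp: cyl_def)
  then show ?thesis
    using False by (simp add: pmass_def cyl_prob_def measure_measure_pmf_finite finite_cyl)
qed

definition cond_prob :: "nat \<Rightarrow> nat \<Rightarrow> real" where
  "cond_prob n a = Pcond d N lam t p \<sigma> n (proj n a)"

lemma cond_prob_eq:
  "1 \<le> n \<Longrightarrow> n \<le> d \<Longrightarrow> a < N \<Longrightarrow> cond_prob n a = cyl_prob n a / cyl_prob (n - 1) a"
  unfolding cond_prob_def Pcond_def by (simp add: proj_proj pmass_proj)

lemma cond_prob_pos: "1 \<le> n \<Longrightarrow> n \<le> d \<Longrightarrow> a < N \<Longrightarrow> 0 < cond_prob n a"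
  by (simp add: cond_prob_eq cyl_prob_pos)

lemma cond_prob_le_1: "1 \<le> n \<Longrightarrow> n \<le> d \<Longrightarrow> a < N \<Longrightarrow> cond_prob n a \<le> 1"
  using cyl_prob_antimono[of "n - 1" n a] cyl_prob_pos by (simp add: cond_prob_eq)

lemma cyl_prob_eq_prod: "m \<le> d \<Longrightarrow> a < N \<Longrightarrow> cyl_prob m a = (\<Prod>n\<in>{1..m}. cond_prob n a)"
proof (induction m)
  case 0
  then show ?case
    by (simp add: cyl_prob_0)
next
  case (Suc m)
  have "cyl_prob (Suc m) a = cyl_prob m a * cond_prob (Suc m) a"
    using Suc.prems cyl_prob_pos[of a m] by (simp add: cond_prob_eq)
  then show ?case
    using Suc by (simp add: prod.nat_ivl_Suc')
qed

definition digit_set :: "(nat \<Rightarrow> nat) \<Rightarrow> real \<Rightarrow> nat \<Rightarrow> nat set" where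
  "digit_set i r l =
     {x. x < N \<and> (\<forall>n\<in>{1..d}. l < Lfun lam i r (\<sigma> (n - 1)) \<longrightarrow> proj n x = proj n (i l))}"

lemma Bball_eq_Pi: "ordered d lam i r \<sigma> \<Longrightarrow> Bball d N lam t i r = Pi UNIV (digit_set i r)"
  unfolding Bball_def ord_of_eq Let_def digit_set_def SigmaN_def Pi_def by auto

lemma measure_digit_set:
  assumes ord: "ordered d lam i r \<sigma>" and i: "i \<in> SigmaN N"
  shows "measure p (digit_set i r l) =
     (\<Prod>n\<in>{1..d}. if l < Lfun lam i r (\<sigma> (n - 1)) then cond_prob n (i l) else 1)"
proof -
  obtain k where k_le: "k \<le> d" and S_eq: "{n\<in>{1..d}. l < Lfun lam i r (\<sigma> (n - 1))} = {1..k}"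
    using ordered_Lfun_gt_initial_segment[OF ord] .
  have il: "i l < N"
    using i by (simp add: SigmaN_def)
  have "x \<in> digit_set i r l \<longleftrightarrow> x \<in> cyl k (i l)" for x
  proof (cases "x < N")
    case True
    have "x \<in> digit_set i r l \<longleftrightarrow> (\<forall>n\<in>{n\<in>{1..d}. l < Lfun lam i r (\<sigma> (n - 1))}. proj n x = proj n (i l))"
      using True by (auto simp: digit_set_def)
    also have "\<dots> \<longleftrightarrow> (\<forall>n\<in>{1..k}. ovl n x (i l))"
      unfolding S_eq using True k_le il by (intro ball_cong refl proj_eq_iff) auto
    also have "\<dots> \<longleftrightarrow> ovl k x (i l)"
      using overlap_mono by (cases "k = 0") (auto simp: overlap_def, fastforce)
    finally show ?thesis
      using True by (simp add: cyl_def)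
  qed (simp_all add: digit_set_def cyl_def)
  then have "digit_set i r l = cyl k (i l)"
    by (rule set_eqI)
  then have "measure p (digit_set i r l) = cyl_prob k (i l)"
    by (simp add: cyl_prob_def)
  also have "\<dots> = (\<Prod>n\<in>{n\<in>{1..d}. l < Lfun lam i r (\<sigma> (n - 1))}. cond_prob n (i l))"
    using cyl_prob_eq_prod[OF k_le il] S_eq by simp
  also have "\<dots> = (\<Prod>n\<in>{1..d}. if l < Lfun lam i r (\<sigma> (n - 1)) then cond_prob n (i l) else 1)"
    by (rule prod.inter_filter) simp
  finally show ?thesis .
qed

lemma measure_Bball:
  assumes ord: "ordered d lam i r \<sigma>" and i: "i \<in> SigmaN N"
  shows "measure (mu p) (Bball d N lam t i r) =
     (\<Prod>n\<in>{1..d}. \<Prod>l<Lfun lam i r (\<sigma> (n - 1)). cond_prob n (i l))"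
proof -
  define K where "K = Lfun lam i r (\<sigma> 0)"
  have L_le_K: "Lfun lam i r (\<sigma> (n - 1)) \<le> K" if "n \<in> {1..d}" for n
    using ordered_Lfun_antimono[OF ord, of 0 "n - 1"] that unfolding K_def by auto
  have "measure (mu p) (Bball d N lam t i r) = (\<Prod>l<K. measure p (digit_set i r l))"
    unfolding mu_def Bball_eq_Pi[OF ord]
  proof (rule measure_PiM_Pi_eventually_one)
    show "measure p (digit_set i r l) = 1" if "K \<le> l" for l
    proof -
      have "\<not> l < Lfun lam i r (\<sigma> (n - 1))" if "n \<in> {1..d}" for n
        using L_le_K[OF that] \<open>K \<le> l\<close> by simp
      then show ?thesis
        by (simp add: measure_digit_set[OF ord i])
    qed
  qed (simp_all add: measure_pmf.prob_space_axioms)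
  also have "\<dots> = (\<Prod>n\<in>{1..d}. \<Prod>l<K. if l < Lfun lam i r (\<sigma> (n - 1)) then cond_prob n (i l) else 1)"
    unfolding measure_digit_set[OF ord i] by (rule prod.swap)
  also have "\<dots> = (\<Prod>n\<in>{1..d}. \<Prod>l<Lfun lam i r (\<sigma> (n - 1)). cond_prob n (i l))"
  proof (rule prod.cong[OF refl])
    fix n assume n: "n \<in> {1..d}"
    have "(\<Prod>l<K. if l < Lfun lam i r (\<sigma> (n - 1)) then cond_prob n (i l) else 1)
        = (\<Prod>l\<in>{l\<in>{..<K}. l < Lfun lam i r (\<sigma> (n - 1))}. cond_prob n (i l))"
      by (rule prod.inter_filter[symmetric]) simp
    also have "{l\<in>{..<K}. l < Lfun lam i r (\<sigma> (n - 1))} = {..<Lfun lam i r (\<sigma> (n - 1))}"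
      using L_le_K[OF n] by auto
    finally show "(\<Prod>l<K. if l < Lfun lam i r (\<sigma> (n - 1)) then cond_prob n (i l) else 1)
        = (\<Prod>l<Lfun lam i r (\<sigma> (n - 1)). cond_prob n (i l))" .
  qed
  finally show ?thesis .
qed

section \<open>Comparing two scales\<close>

definition cond_exponent :: "nat \<Rightarrow> nat \<Rightarrow> real" where
  "cond_exponent n j = ln (Pcond d N lam t p \<sigma> n j) / ln (lam j (\<sigma> (n - 1)))"

abbreviation "exponent_max n \<equiv> Max (cond_exponent n ` reps n)"
abbreviation "exponent_min n \<equiv> Min (cond_exponent n ` reps n)"

lemma Supper_eq: "Supper d N lam t p \<sigma> = (\<Sum>n=1..d. exponent_max n)"
  unfolding Supper_def cond_exponent_def ..

lemma Slower_eq: "Slower d N lam t p \<sigma> = (\<Sum>n=1..d. exponent_min n)"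
  unfolding Slower_def cond_exponent_def ..

lemma cond_exponent_proj: "1 \<le> n \<Longrightarrow> n \<le> d \<Longrightarrow> a < N
    \<Longrightarrow> cond_exponent n (proj n a) = ln (cond_prob n a) / ln (lam a (\<sigma> (n - 1)))"
  using lam_proj[of n a] by (simp add: cond_exponent_def cond_prob_def)

lemma cond_prob_eq_powr:
  assumes "1 \<le> n" "n \<le> d" "a < N"
  shows "cond_prob n a = lam a (\<sigma> (n - 1)) powr cond_exponent n (proj n a)"
proof -
  have "0 < lam a (\<sigma> (n - 1))" "lam a (\<sigma> (n - 1)) < 1"
    using lam_pos lam_less_1 \<sigma>_less assms by auto
  moreover have "cond_exponent n (proj n a) = ln (cond_prob n a) / ln (lam a (\<sigma> (n - 1)))"
    using cond_exponent_proj assms by blast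
  ultimately have "lam a (\<sigma> (n - 1)) powr cond_exponent n (proj n a) = exp (ln (cond_prob n a))"
    by (simp add: powr_def)
  then show ?thesis
    using cond_prob_pos assms by simp
qed

lemma cond_exponent_nonneg:
  assumes "1 \<le> n" "n \<le> d" "j \<in> reps n"
  shows "0 \<le> cond_exponent n j"
proof -
  have j: "j < N" and "proj n j = j"
    using assms reps_subset proj_reps by auto
  then have "cond_exponent n j = ln (cond_prob n j) / ln (lam j (\<sigma> (n - 1)))"
    using cond_exponent_proj assms by metis
  moreover have "ln (cond_prob n j) \<le> 0"
    using cond_prob_pos cond_prob_le_1 assms(1,2) j by simp
  moreover have "ln (lam j (\<sigma> (n - 1))) < 0"
    using lam_pos lam_less_1 \<sigma>_less assms(1,2) j by simp
  ultimately show ?thesis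
    by (simp add: divide_nonpos_neg)
qed

lemma cond_exponent_proj_bounds:
  assumes "1 \<le> n" "n \<le> d" "a < N"
  shows "0 \<le> exponent_min n"
    and "exponent_min n \<le> cond_exponent n (proj n a)"
    and "cond_exponent n (proj n a) \<le> exponent_max n"
proof -
  have fin: "finite (cond_exponent n ` reps n)"
    using reps_subset finite_subset by blast
  have mem: "cond_exponent n (proj n a) \<in> cond_exponent n ` reps n"
    using proj_reps_overlap[OF assms] by simp
  show "0 \<le> exponent_min n"
    using fin mem cond_exponent_nonneg[OF assms(1,2)] by (subst Min_ge_iff) auto
  show "exponent_min n \<le> cond_exponent n (proj n a)" "cond_exponent n (proj n a) \<le> exponent_max n"
    using fin mem by simp_all
qed

lemma prod_cond_prob_powr_bounds:
  assumes i: "i \<in> SigmaN N" and n: "1 \<le> n" "n \<le> d"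
  shows "(\<Prod>l\<in>A. lam (i l) (\<sigma> (n - 1))) powr exponent_max n \<le> (\<Prod>l\<in>A. cond_prob n (i l))"
    and "(\<Prod>l\<in>A. cond_prob n (i l)) \<le> (\<Prod>l\<in>A. lam (i l) (\<sigma> (n - 1))) powr exponent_min n"
proof -
  have il: "i l < N" for l
    using i by (simp add: SigmaN_def)
  have "(\<Prod>l\<in>A. cond_prob n (i l))
      = (\<Prod>l\<in>A. lam (i l) (\<sigma> (n - 1)) powr cond_exponent n (proj n (i l)))"
    using cond_prob_eq_powr n il by simp
  moreover have "0 < lam (i l) (\<sigma> (n - 1)) \<and> lam (i l) (\<sigma> (n - 1)) \<le> 1"
    and "exponent_min n \<le> cond_exponent n (proj n (i l))
      \<and> cond_exponent n (proj n (i l)) \<le> exponent_max n" for l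
    using lam_pos lam_less_1 \<sigma>_less n il cond_exponent_proj_bounds[OF n il]
    by (simp_all add: less_imp_le)
  ultimately show "(\<Prod>l\<in>A. lam (i l) (\<sigma> (n - 1))) powr exponent_max n \<le> (\<Prod>l\<in>A. cond_prob n (i l))"
    and "(\<Prod>l\<in>A. cond_prob n (i l)) \<le> (\<Prod>l\<in>A. lam (i l) (\<sigma> (n - 1))) powr exponent_min n"
    using prod_powr_bounds[of A "\<lambda>l. lam (i l) (\<sigma> (n - 1))" "exponent_min n"
        "\<lambda>l. cond_exponent n (proj n (i l))" "exponent_max n"] by simp_all
qed

lemma prod_cond_prob_between_bounds:
  assumes i: "i \<in> SigmaN N" and n: "n \<in> {1..d}" and r: "0 < r" "r \<le> R" "R \<le> 1"
  defines "A \<equiv> {Lfun lam i R (\<sigma> (n - 1))..<Lfun lam i r (\<sigma> (n - 1))}"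
  shows "(lam_min d N lam * (r / R)) powr exponent_max n \<le> (\<Prod>l\<in>A. cond_prob n (i l))"
    and "(\<Prod>l\<in>A. cond_prob n (i l)) \<le> (r / (lam_min d N lam * R)) powr exponent_min n"
proof -
  obtain q where q: "q < 1" "\<forall>j<N. \<forall>c<d. lam j c \<le> q"
    using lam_uniformly_less_1 by blast
  have c: "\<sigma> (n - 1) < d"
    using n by (intro \<sigma>_less) auto
  have il: "i l < N" for l
    using i by (simp add: SigmaN_def)
  note between = prod_Lfun_between_bounds[of "lam_min d N lam" q lam i "\<sigma> (n - 1)" r R,
      folded A_def, OF lam_min_pos q(1) lam_min_le[OF il c] _ r]
  have exps: "0 \<le> exponent_min n" "0 \<le> exponent_max n"
    using cond_exponent_proj_bounds[of n 0] n N_ge_1 by (auto intro: order_trans)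
  have "(lam_min d N lam * (r / R)) powr exponent_max n
      \<le> (\<Prod>l\<in>A. lam (i l) (\<sigma> (n - 1))) powr exponent_max n"
    using between(1) q(2) il c exps lam_min_pos r by (intro powr_mono2) auto
  also have "\<dots> \<le> (\<Prod>l\<in>A. cond_prob n (i l))"
    using prod_cond_prob_powr_bounds(1) i n by simp
  finally show "(lam_min d N lam * (r / R)) powr exponent_max n \<le> (\<Prod>l\<in>A. cond_prob n (i l))" .
  have "(\<Prod>l\<in>A. cond_prob n (i l)) \<le> (\<Prod>l\<in>A. lam (i l) (\<sigma> (n - 1))) powr exponent_min n"
    using prod_cond_prob_powr_bounds(2) i n by simp
  also have "\<dots> \<le> (r / (lam_min d N lam * R)) powr exponent_min n"
    using between(2) q(2) il c exps lam_pos by (intro powr_mono2 prod_nonneg) (auto intro: less_imp_le)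
  finally show "(\<Prod>l\<in>A. cond_prob n (i l)) \<le> (r / (lam_min d N lam * R)) powr exponent_min n" .
qed

lemma measure_Bball_quotient:
  assumes i: "i \<in> SigmaN N" and r: "0 < r" "r \<le> R"
    and ordR: "ordered d lam i R \<sigma>" and ordr: "ordered d lam i r \<sigma>"
  shows "measure (mu p) (Bball d N lam t i r) / measure (mu p) (Bball d N lam t i R)
     = (\<Prod>n\<in>{1..d}. \<Prod>l\<in>{Lfun lam i R (\<sigma> (n - 1))..<Lfun lam i r (\<sigma> (n - 1))}. cond_prob n (i l))"
proof -
  have il: "i l < N" for l
    using i by (simp add: SigmaN_def)
  have split: "(\<Prod>l<Lfun lam i r (\<sigma> (n - 1)). cond_prob n (i l))
      = (\<Prod>l<Lfun lam i R (\<sigma> (n - 1)). cond_prob n (i l))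
        * (\<Prod>l\<in>{Lfun lam i R (\<sigma> (n - 1))..<Lfun lam i r (\<sigma> (n - 1))}. cond_prob n (i l))"
    if n: "n \<in> {1..d}" for n
  proof -
    have "Lfun lam i R (\<sigma> (n - 1)) \<le> Lfun lam i r (\<sigma> (n - 1))"
      using n r i by (intro Lfun_scale_antimono \<sigma>_less) auto
    then show ?thesis
      by (simp add: atLeast0LessThan[symmetric] prod.atLeastLessThan_concat)
  qed
  have "measure (mu p) (Bball d N lam t i r)
      = (\<Prod>n\<in>{1..d}. (\<Prod>l<Lfun lam i R (\<sigma> (n - 1)). cond_prob n (i l))
          * (\<Prod>l\<in>{Lfun lam i R (\<sigma> (n - 1))..<Lfun lam i r (\<sigma> (n - 1))}. cond_prob n (i l)))"
    unfolding measure_Bball[OF ordr i] by (rule prod.cong[OF refl split])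
  also have "\<dots> = measure (mu p) (Bball d N lam t i R)
      * (\<Prod>n\<in>{1..d}. \<Prod>l\<in>{Lfun lam i R (\<sigma> (n - 1))..<Lfun lam i r (\<sigma> (n - 1))}. cond_prob n (i l))"
    unfolding measure_Bball[OF ordR i] by (rule prod.distrib)
  moreover have "0 < measure (mu p) (Bball d N lam t i R)"
    unfolding measure_Bball[OF ordR i] using cond_prob_pos il by (auto intro!: prod_pos)
  ultimately show ?thesis
    by simp
qed

lemma measure_Bball_quotient_bounds:
  assumes i: "i \<in> SigmaN N" and r: "0 < r" "r \<le> R" "R \<le> 1"
    and ordR: "ordered d lam i R \<sigma>" and ordr: "ordered d lam i r \<sigma>"
  shows "(lam_min d N lam * (r / R)) powr Supper d N lam t p \<sigma>
      \<le> measure (mu p) (Bball d N lam t i r) / measure (mu p) (Bball d N lam t i R)"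
    and "measure (mu p) (Bball d N lam t i r) / measure (mu p) (Bball d N lam t i R)
      \<le> (r / (lam_min d N lam * R)) powr Slower d N lam t p \<sigma>"
proof -
  have nonzero: "lam_min d N lam * (r / R) \<noteq> 0" "r / (lam_min d N lam * R) \<noteq> 0"
    using lam_min_pos r by auto
  have il: "i l < N" for l
    using i by (simp add: SigmaN_def)
  show "(lam_min d N lam * (r / R)) powr Supper d N lam t p \<sigma>
      \<le> measure (mu p) (Bball d N lam t i r) / measure (mu p) (Bball d N lam t i R)"
    unfolding measure_Bball_quotient[OF i r(1,2) ordR ordr] Supper_eq powr_sum[OF nonzero(1)]
    using prod_cond_prob_between_bounds(1)[OF i _ r] by (intro prod_mono) auto
  show "measure (mu p) (Bball d N lam t i r) / measure (mu p) (Bball d N lam t i R)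
      \<le> (r / (lam_min d N lam * R)) powr Slower d N lam t p \<sigma>"
    unfolding measure_Bball_quotient[OF i r(1,2) ordR ordr] Slower_eq powr_sum[OF nonzero(2)]
    using prod_cond_prob_between_bounds(2)[OF i _ r] cond_prob_pos il
    by (intro prod_mono conjI prod_nonneg) (auto intro: less_imp_le)
qed

definition ratio_const :: real where
  "ratio_const = 1 + inverse (lam_min d N lam) powr Supper d N lam t p \<sigma>
                   + inverse (lam_min d N lam) powr Slower d N lam t p \<sigma>"

lemma ratio_const_gt_1: "1 < ratio_const"
  unfolding ratio_const_def using lam_min_pos by (simp add: add_pos_pos)

lemma Bball_ratio_bounds:
  assumes i: "i \<in> SigmaN N" and r: "0 < r" "r \<le> R" "R \<le> 1"
    and ordR: "ordered d lam i R \<sigma>" and ordr: "ordered d lam i r \<sigma>"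
  shows "inverse ratio_const * (R / r) powr Slower d N lam t p \<sigma>
      \<le> measure (mu p) (Bball d N lam t i R) / measure (mu p) (Bball d N lam t i r)"
    and "measure (mu p) (Bball d N lam t i R) / measure (mu p) (Bball d N lam t i r)
      \<le> ratio_const * (R / r) powr Supper d N lam t p \<sigma>"
proof -
  let ?m = "lam_min d N lam" and ?Su = "Supper d N lam t p \<sigma>" and ?Sl = "Slower d N lam t p \<sigma>"
  define Q where "Q = measure (mu p) (Bball d N lam t i r) / measure (mu p) (Bball d N lam t i R)"
  have Q: "(?m * (r / R)) powr ?Su \<le> Q" "Q \<le> (r / (?m * R)) powr ?Sl"
    unfolding Q_def using measure_Bball_quotient_bounds[OF assms] by auto
  moreover have "0 < (?m * (r / R)) powr ?Su"
    using lam_min_pos r by simp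
  ultimately have Q_pos: "0 < Q"
    by linarith
  have "measure (mu p) (Bball d N lam t i R) / measure (mu p) (Bball d N lam t i r) = inverse Q"
    unfolding Q_def by simp
  moreover have "inverse ratio_const * (R / r) powr ?Sl \<le> inverse Q"
  proof -
    have "inverse ratio_const \<le> inverse (inverse ?m powr ?Sl)"
      unfolding ratio_const_def using lam_min_pos by (intro le_imp_inverse_le) auto
    then have "inverse ratio_const * (R / r) powr ?Sl \<le> ?m powr ?Sl * (R / r) powr ?Sl"
      by (intro mult_right_mono) (simp_all add: inverse_powr)
    also have "\<dots> = inverse ((r / (?m * R)) powr ?Sl)"
      by (simp add: powr_mult[symmetric] inverse_powr[symmetric])
    also have "\<dots> \<le> inverse Q"
      using Q(2) Q_pos by (intro le_imp_inverse_le) auto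
    finally show ?thesis .
  qed
  moreover have "inverse Q \<le> ratio_const * (R / r) powr ?Su"
  proof -
    have "inverse Q \<le> inverse ((?m * (r / R)) powr ?Su)"
      using Q(1) lam_min_pos r by (intro le_imp_inverse_le) auto
    also have "\<dots> = inverse ?m powr ?Su * (R / r) powr ?Su"
      by (simp add: inverse_powr[symmetric] powr_mult[symmetric] divide_inverse mult.commute)
    also have "\<dots> \<le> ratio_const * (R / r) powr ?Su"
      unfolding ratio_const_def by (intro mult_right_mono) auto
    finally show ?thesis .
  qed
  ultimately show "inverse ratio_const * (R / r) powr ?Sl
      \<le> measure (mu p) (Bball d N lam t i R) / measure (mu p) (Bball d N lam t i r)"
    and "measure (mu p) (Bball d N lam t i R) / measure (mu p) (Bball d N lam t i r)
      \<le> ratio_const * (R / r) powr ?Su"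
    by simp_all
qed

end

theorem lemma5p3:
  fixes d N :: nat and lam t :: "nat \<Rightarrow> nat \<Rightarrow> real" and p :: "nat pmf" and \<sigma> :: "nat \<Rightarrow> nat"
  assumes "sponge_IFS d N lam t"
    and "\<sigma> \<in> Aset d N lam"
    and "set_pmf p = {..<N}"
  shows "\<exists>C>1. \<forall>i\<in>SigmaN N. \<forall>R r::real.
           0 < R \<and> R \<le> 1 \<and> 0 < r \<and> r < lam_min d N lam * R
           \<and> ordered d lam i R \<sigma> \<and> ordered d lam i r \<sigma> \<longrightarrow>
             inverse C * (R / r) powr Slower d N lam t p \<sigma>
               \<le> measure (mu p) (Bball d N lam t i R) / measure (mu p) (Bball d N lam t i r)
           \<and> measure (mu p) (Bball d N lam t i R) / measure (mu p) (Bball d N lam t i r)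
               \<le> C * (R / r) powr Supper d N lam t p \<sigma>"
proof -
  have "perm_d d \<sigma>"
    using assms(2) unfolding Aset_def ordered_def by auto
  then interpret sponge_ordering d N lam t p \<sigma>
    using assms(1,3) by unfold_locales
  have r_le_R: "r \<le> R" if "0 < R" "r < lam_min d N lam * R" for R r :: real
    using that lam_min_pos lam_min_less_1 mult_left_le_one_le[of R "lam_min d N lam"] by linarith
  show ?thesis
    by (intro exI[of _ ratio_const] conjI ratio_const_gt_1 ballI allI impI)
      (use Bball_ratio_bounds r_le_R in auto)
qed

end
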